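(* Let $f:\mathbb{N}\to\mathbb{R}$ be a function with the following property: for every positive integer $h$, every asymptotic basis $A$ with $G(A)\le h$, and every finite subset $X\subseteq A$ such that $A\setminus X$ is an asymptotic basis (i.e. $G(A\setminus X)<\infty$), one has $$G(A\setminus X)\le d(X)\cdot f(h).$$ Then $\liminf_{h\to\infty} f(h)/h^3 \ge 1/27$.
   Context: All sets are sets of integers $A\subseteq\mathbb{Z}$ with $|A\cap\mathbb{Z}_{<0}|<\infty$. Such a set $A$ is an asymptotic basis if for some positive integer $h$ the $h$-fold sumset $hA=\{a_1+\dots+a_h: a_i\in A\}$ contains all but finitely many non-negative integers; the least such $h$ is the order $G(A)$ (and $G(A)=\infty$ if no such $h$ exists). For a finite set $X$ of integers with at least two elements, $\mathrm{diam}(X)=\max X-\min X$, $\delta(X)=\gcd\{x-y: x,y\in X\}$, and $d(X)=\mathrm{diam}(X)/\delta(X)$. *)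

theory Defs
  imports "HOL-Analysis.Analysis" "HOL-Library.Extended_Nat"
begin

definition admissible :: "int set \<Rightarrow> bool" where
  "admissible A \<longleftrightarrow> finite {a \<in> A. a < 0}"

definition sumset :: "nat \<Rightarrow> int set \<Rightarrow> int set" where
  "sumset h A = {sum_list xs | xs. length xs = h \<and> set xs \<subseteq> A}"

definition basis_of_order :: "nat \<Rightarrow> int set \<Rightarrow> bool" where
  "basis_of_order h A \<longleftrightarrow> finite {n::int. 0 \<le> n \<and> n \<notin> sumset h A}"

definition G :: "int set \<Rightarrow> enat" where
  "G A = (if \<exists>h>0. basis_of_order h A
          then enat (LEAST h. 0 < h \<and> basis_of_order h A) else \<infinity>)"

definition diam :: "int set \<Rightarrow> int" where
  "diam X = Max X - Min X"

definition delta :: "int set \<Rightarrow> int" where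
  "delta X = Gcd {x - y | x y. x \<in> X \<and> y \<in> X}"

definition dnorm :: "int set \<Rightarrow> real" where
  "dnorm X = real_of_int (diam X) / real_of_int (delta X)"

end

theory Submission
  imports Defs
begin

(*
  For s \<ge> 2 consider A_s = {0,1,s,s^2} \<union> s^3\<nat> and X = {s,s^2}.
  Writing every n \<ge> 0 as n = a + b s + c s^2 + q s^3 with base-s digits
  a,b,c < s shows G(A_s) \<le> 3s - 2.  On the other hand A_s - X is the set
  B_M = {0,1} \<union> M\<nat> with M = s^3, and G(B_M) = M: M summands suffice
  (division with remainder), while fewer than M summands never reach the
  numbers M j + (M - 1) with j \<ge> 1.  Since X has two elements, d(X) = 1.
  Choosing s = \<lfloor>(h+2)/3\<rfloor> the hypothesis gives s^3 \<le> f(h), and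
  s \<ge> h/3 yields f(h) \<ge> h^3/27 for all h \<ge> 4.
*)

text \<open>A list of at most h elements of A is an h-fold sum, by padding with zeros.\<close>
lemma sum_list_in_sumset:
  assumes "0 \<in> A" "set xs \<subseteq> A" "length xs \<le> h"
  shows "sum_list xs \<in> sumset h A"
proof -
  let ?ys = "xs @ replicate (h - length xs) 0"
  have "length ?ys = h" "set ?ys \<subseteq> A" "sum_list ?ys = sum_list xs"
    using assms by (auto simp: sum_list_replicate)
  then show ?thesis unfolding sumset_def by (metis (mono_tags, lifting) mem_Collect_eq)
qed

lemma basis_of_orderI:
  assumes "\<And>n. 0 \<le> n \<Longrightarrow> n \<in> sumset h A"
  shows "basis_of_order h A"
proof -
  have "{n::int. 0 \<le> n \<and> n \<notin> sumset h A} = {}" using assms by auto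
  then show ?thesis unfolding basis_of_order_def by (metis finite.emptyI)
qed

lemma G_le:
  assumes "0 < h" "basis_of_order h A"
  shows "G A \<le> enat h"
proof -
  have "(LEAST h. 0 < h \<and> basis_of_order h A) \<le> h"
    using assms by (intro Least_le) simp
  then show ?thesis using assms unfolding G_def by auto
qed

lemma G_eqI:
  assumes "0 < M" "basis_of_order M A"
    and smaller: "\<And>h. 0 < h \<Longrightarrow> h < M \<Longrightarrow> \<not> basis_of_order h A"
  shows "G A = enat M"
proof -
  have "(LEAST h. 0 < h \<and> basis_of_order h A) = M"
    by (rule Least_equality) (use assms in \<open>auto simp: not_less[symmetric]\<close>)
  then show ?thesis using assms unfolding G_def by auto
qed

lemma admissible_if_nonneg:
  assumes "\<And>a. a \<in> A \<Longrightarrow> 0 \<le> a"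
  shows "admissible A"
proof -
  have "{a \<in> A. a < 0} = {}" using assms by force
  then show ?thesis unfolding admissible_def by (metis finite.emptyI)
qed

lemma dnorm_two_elements:
  fixes x y :: int
  assumes "x < y"
  shows "dnorm {x, y} = 1"
proof -
  have "{u - v | u v. u \<in> {x, y} \<and> v \<in> {x, y}} = {0, y - x, -(y - x)}" by auto
  then have "delta {x, y} = y - x" unfolding delta_def using assms by simp
  moreover have "diam {x, y} = y - x" unfolding diam_def using assms by simp
  ultimately show ?thesis unfolding dnorm_def using assms by simp
qed

definition mult_basis :: "nat \<Rightarrow> int set" where
  "mult_basis M = {0, 1} \<union> {int M * k | k. 0 \<le> k}"

text \<open>A sum of elements of B_M is c + M t, where c counts the ones; a
  positive multiple of M uses up one summand, so t > 0 forces c < length.\<close>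
lemma sum_mult_basis:
  assumes "set xs \<subseteq> mult_basis M"
  shows "\<exists>c t. sum_list xs = c + int M * t \<and> 0 \<le> c \<and> c \<le> int (length xs)
     \<and> 0 \<le> t \<and> (0 < t \<longrightarrow> c < int (length xs))"
  using assms
proof (induction xs)
  case Nil
  show ?case by (intro exI[of _ 0]) simp
next
  case (Cons x xs)
  then obtain c t where ct: "sum_list xs = c + int M * t" "0 \<le> c" "c \<le> int (length xs)"
     "0 \<le> t" "0 < t \<longrightarrow> c < int (length xs)" by auto
  from Cons.prems consider "x = 0" | "x = 1" | k where "x = int M * k" "0 \<le> k"
    unfolding mult_basis_def by auto
  then show ?case
  proof cases
    case 1 then show ?thesis using ct by (intro exI[of _ c] exI[of _ t]) auto
  next
    case 2 then show ?thesis using ct by (intro exI[of _ "c + 1"] exI[of _ t]) auto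
  next
    case 3 then show ?thesis using ct
      by (intro exI[of _ c] exI[of _ "t + k"]) (auto simp: algebra_simps)
  qed
qed

text \<open>With h < M summands the numbers M j + (M - 1), j \<ge> 1, are missed:
  comparing residues mod M forces M - 1 ones, hence no room for a multiple.\<close>
lemma gap_mult_basis:
  assumes "h < M" "1 \<le> j"
  shows "int M * j + (int M - 1) \<notin> sumset h (mult_basis M)"
proof
  assume "int M * j + (int M - 1) \<in> sumset h (mult_basis M)"
  then obtain xs where xs: "length xs = h" "set xs \<subseteq> mult_basis M"
      "sum_list xs = int M * j + (int M - 1)"
    unfolding sumset_def by auto
  obtain c t where ct: "sum_list xs = c + int M * t" "0 \<le> c" "c \<le> int h"
      "0 \<le> t" "0 < t \<longrightarrow> c < int h"
    using sum_mult_basis[OF xs(2)] xs(1) by blast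
  have "c mod int M = (c + int M * t) mod int M" by simp
  also have "\<dots> = (int M - 1 + int M * j) mod int M"
    using ct(1) xs(3) by (simp add: add.commute)
  also have "\<dots> = (int M - 1) mod int M" by simp
  finally have "c mod int M = (int M - 1) mod int M" .
  moreover have "c mod int M = c" using ct(2,3) assms(1) by simp
  moreover have "(int M - 1) mod int M = int M - 1"
    using assms(1) by (intro mod_pos_pos_trivial) auto
  ultimately have "c = int M - 1" by simp
  then have "t = j" using ct(1) xs(3) assms(1) by simp
  then show False using ct(5) \<open>c = int M - 1\<close> assms by simp
qed

lemma not_basis_mult_basis:
  assumes "h < M"
  shows "\<not> basis_of_order h (mult_basis M)"
proof
  assume "basis_of_order h (mult_basis M)"
  define g where "g = (\<lambda>j::nat. int M * (int j + 1) + (int M - 1))"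
  have "inj g" using assms by (auto intro!: injI simp: g_def)
  moreover have "range g \<subseteq> {n::int. 0 \<le> n \<and> n \<notin> sumset h (mult_basis M)}"
    using gap_mult_basis[OF assms] assms by (auto simp: g_def)
  ultimately have "infinite {n::int. 0 \<le> n \<and> n \<notin> sumset h (mult_basis M)}"
    using infinite_super range_inj_infinite by blast
  then show False using \<open>basis_of_order h (mult_basis M)\<close>
    unfolding basis_of_order_def by simp
qed

text \<open>n = r + M q with 0 \<le> r < M is a sum of r ones and the multiple M q.\<close>
lemma basis_mult_basis:
  assumes "0 < M"
  shows "basis_of_order M (mult_basis M)"
proof (rule basis_of_orderI)
  fix n :: int assume "0 \<le> n"
  define q where "q = n div int M"
  define r where "r = n mod int M"
  have r: "0 \<le> r" "r < int M" using assms unfolding r_def by auto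
  have q: "0 \<le> q" using \<open>0 \<le> n\<close> assms unfolding q_def by (simp add: pos_imp_zdiv_nonneg_iff)
  let ?xs = "replicate (nat r) 1 @ [int M * q]"
  have "sum_list ?xs = n" using r by (simp add: sum_list_replicate q_def r_def)
  moreover have "sum_list ?xs \<in> sumset M (mult_basis M)"
    using r q by (intro sum_list_in_sumset) (auto simp: mult_basis_def)
  ultimately show "n \<in> sumset M (mult_basis M)" by simp
qed

text \<open>Removing X from A_s will leave this set, whose order is large.\<close>
lemma G_mult_basis:
  assumes "0 < M"
  shows "G (mult_basis M) = enat M"
  using assms basis_mult_basis not_basis_mult_basis by (intro G_eqI) auto

definition cube_basis :: "nat \<Rightarrow> int set" where
  "cube_basis s = {0, 1, int s, int s ^ 2} \<union> {int s ^ 3 * k | k. 0 \<le> k}"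

lemma base_digits:
  fixes n S :: int
  assumes "0 < S" "0 \<le> n"
  obtains a b c q where "n = a + S * b + S ^ 2 * c + S ^ 3 * q"
    "0 \<le> a" "a < S" "0 \<le> b" "b < S" "0 \<le> c" "c < S" "0 \<le> q"
proof -
  define a where "a = n mod S"
  define b where "b = n div S mod S"
  define c where "c = n div S div S mod S"
  define q where "q = n div S div S div S"
  have "n = a + S * (n div S)" "n div S = b + S * (n div S div S)"
    "n div S div S = c + S * q" unfolding a_def b_def c_def q_def by simp_all
  then have "n = a + S * (b + S * (c + S * q))" by simp
  then have "n = a + S * b + S ^ 2 * c + S ^ 3 * q"
    by (simp add: algebra_simps power2_eq_square power3_eq_cube)
  moreover have "0 \<le> q" using assms by (simp add: q_def pos_imp_zdiv_nonneg_iff)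
  ultimately show ?thesis using that assms by (simp add: a_def b_def c_def)
qed

text \<open>The digit expansion uses at most 3(s-1) + 1 \<le> h summands.\<close>
lemma basis_cube_basis:
  assumes "1 \<le> s" "3 * s \<le> h + 2"
  shows "basis_of_order h (cube_basis s)"
proof (rule basis_of_orderI)
  fix n :: int assume "0 \<le> n"
  define S where "S = int s"
  have "0 < S" using assms(1) unfolding S_def by simp
  obtain a b c q where n: "n = a + S * b + S ^ 2 * c + S ^ 3 * q"
      and digits: "0 \<le> a" "a < S" "0 \<le> b" "b < S" "0 \<le> c" "c < S" "0 \<le> q"
    using base_digits[OF \<open>0 < S\<close> \<open>0 \<le> n\<close>] by blast
  let ?xs = "replicate (nat a) 1 @ replicate (nat b) S @ replicate (nat c) (S ^ 2) @ [S ^ 3 * q]"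
  have len: "length ?xs \<le> h" using digits assms unfolding S_def by simp
  have "sum_list ?xs = n" using n digits by (simp add: sum_list_replicate algebra_simps)
  moreover have "sum_list ?xs \<in> sumset h (cube_basis s)"
    using digits len by (intro sum_list_in_sumset) (auto simp: cube_basis_def S_def)
  ultimately show "n \<in> sumset h (cube_basis s)" by simp
qed

text \<open>Among 1, s, s^2 and the multiples of s^3 only 1 survives removal of
  {s, s^2}, since 1 < s < s^2 < s^3 when s \<ge> 2.\<close>
lemma cube_basis_minus:
  assumes "2 \<le> s"
  shows "cube_basis s - {int s, int s ^ 2} = mult_basis (s ^ 3)"
proof -
  define S where "S = int s"
  have "2 \<le> S" using assms by (simp add: S_def)
  then have "S * 1 < S * S" "S * S * 1 < S * S * S"
    by (intro mult_strict_left_mono; simp)+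
  then have S: "0 < S" "S < S ^ 2" "S ^ 2 < S ^ 3" "0 < S ^ 2" "S < S ^ 3"
    using \<open>2 \<le> S\<close> unfolding power2_eq_square power3_eq_cube by linarith+
  have not_mult: "x \<noteq> S ^ 3 * k" if "0 < x" "x < S ^ 3" "0 \<le> k" for x k
  proof
    assume x: "x = S ^ 3 * k"
    then have "1 \<le> k" using that by (cases "k = 0") auto
    then have "S ^ 3 * 1 \<le> S ^ 3 * k" using S by (intro mult_left_mono) auto
    then show False using x that by simp
  qed
  have "S \<notin> {S ^ 3 * k | k. 0 \<le> k}" "S ^ 2 \<notin> {S ^ 3 * k | k. 0 \<le> k}"
    using S not_mult[of S] not_mult[of "S ^ 2"] by auto
  moreover have "1 \<notin> {S, S ^ 2}" "0 \<notin> {S, S ^ 2}" using S by auto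
  ultimately have "{0, 1, S, S ^ 2} \<union> {S ^ 3 * k | k. 0 \<le> k} - {S, S ^ 2}
      = {0, 1} \<union> {S ^ 3 * k | k. 0 \<le> k}" by auto
  then show ?thesis unfolding cube_basis_def mult_basis_def S_def by simp
qed

lemma cubic_lower_bound:
  fixes f :: "nat \<Rightarrow> real"
  assumes hyp: "\<And>h A X k. 0 < h \<Longrightarrow> admissible A \<Longrightarrow> G A \<le> enat h \<Longrightarrow>
      finite X \<Longrightarrow> X \<subseteq> A \<Longrightarrow> 2 \<le> card X \<Longrightarrow> G (A - X) = enat k \<Longrightarrow>
      real k \<le> dnorm X * f h"
    and h: "4 \<le> h"
  shows "real h ^ 3 / 27 \<le> f h"
proof -
  define s where "s = (h + 2) div 3"
  have s: "2 \<le> s" "3 * s \<le> h + 2" "h \<le> 3 * s" using h unfolding s_def by auto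
  define X where "X = {int s, int s ^ 2}"
  have X: "int s < int s ^ 2" using s by (simp add: power2_eq_square)
  have "admissible (cube_basis s)"
    by (rule admissible_if_nonneg) (auto simp: cube_basis_def)
  moreover have "G (cube_basis s) \<le> enat h"
    using h s by (intro G_le basis_cube_basis) auto
  moreover have "G (cube_basis s - X) = enat (s ^ 3)"
    unfolding X_def cube_basis_minus[OF s(1)] using s by (intro G_mult_basis) simp
  moreover have "X \<subseteq> cube_basis s" "card X = 2"
    using X unfolding X_def cube_basis_def by auto
  ultimately have "real (s ^ 3) \<le> dnorm X * f h"
    using hyp[of h "cube_basis s" X "s ^ 3"] h unfolding X_def by simp
  then have "real s ^ 3 \<le> f h" using dnorm_two_elements[OF X] by (simp add: X_def)
  moreover have "(real h / 3) ^ 3 \<le> real s ^ 3" using s by (intro power_mono) auto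
  ultimately show ?thesis by (simp add: power_divide)
qed

theorem theorem1p2:
  fixes f :: "nat \<Rightarrow> real"
  assumes hyp: "\<And>h A X k. 0 < h \<Longrightarrow> admissible A \<Longrightarrow> G A \<le> enat h \<Longrightarrow>
      finite X \<Longrightarrow> X \<subseteq> A \<Longrightarrow> 2 \<le> card X \<Longrightarrow> G (A - X) = enat k \<Longrightarrow>
      real k \<le> dnorm X * f h"
  shows "Liminf sequentially (\<lambda>h. ereal (f h / real h ^ 3)) \<ge> ereal (1/27)"
proof (rule Liminf_bounded)
  have "1/27 \<le> f h / real h ^ 3" if "4 \<le> h" for h
  proof -
    have "0 < real h ^ 3" using that by simp
    then show ?thesis using cubic_lower_bound[OF hyp that] by (simp add: pos_le_divide_eq)
  qed
  then show "\<forall>\<^sub>F h in sequentially. ereal (1/27) \<le> ereal (f h / real h ^ 3)"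
    unfolding eventually_sequentially ereal_less_eq(3) by blast
qed

end
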